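(* Let $n\ge 4$ and let $S\subseteq\mathbb{Z}_n$ with $0\notin S$, $S=-S$, such that $\mathrm{Cay}(\mathbb{Z}_n,S)$ is connected, and let $k=|S|$. If $k$ divides $n$ and $s\not\equiv s'\pmod k$ for all distinct $s,s'\in S$, then $\mathrm{Cay}(\mathbb{Z}_n,S)$ admits a total perfect code.
   Context: Elements of $\mathbb{Z}_n$ are identified with integers in $\{0,1,\dots,n-1\}$. The circulant graph $\mathrm{Cay}(\mathbb{Z}_n,S)$ has vertex set $\mathbb{Z}_n$ with $u,v$ adjacent iff $v-u\in S$; its degree is $|S|$. A total perfect code in a graph $\Gamma=(V,E)$ is a subset $C\subseteq V$ such that every vertex of $V$ has exactly one neighbour in $C$. *)

theory Defs
  imports Main
begin

text \<open>Elements of Z_n are represented by the naturals 0,...,n-1.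
  The circulant graph Cay(Z_n, S): u, v adjacent iff (v - u) mod n is in S.\<close>

definition circ_adj :: "nat \<Rightarrow> nat set \<Rightarrow> nat \<Rightarrow> nat \<Rightarrow> bool" where
  "circ_adj n S u v \<longleftrightarrow> u < n \<and> v < n \<and> nat ((int v - int u) mod int n) \<in> S"

definition circ_symmetric :: "nat \<Rightarrow> nat set \<Rightarrow> bool" where
  "circ_symmetric n S \<longleftrightarrow> (\<forall>s\<in>S. (n - s) mod n \<in> S)"

definition circ_connected :: "nat \<Rightarrow> nat set \<Rightarrow> bool" where
  "circ_connected n S \<longleftrightarrow> (\<forall>u<n. \<forall>v<n. (circ_adj n S)\<^sup>*\<^sup>* u v)"

definition total_perfect_code :: "nat \<Rightarrow> nat set \<Rightarrow> nat set \<Rightarrow> bool" where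
  "total_perfect_code n S C \<longleftrightarrow> C \<subseteq> {0..<n} \<and>
     (\<forall>v<n. \<exists>!c. c \<in> C \<and> circ_adj n S v c)"

end

theory Submission
  imports Defs "HOL-Number_Theory.Cong"
begin

text \<open>Since \<open>k\<close> divides \<open>n\<close>, reduction mod \<open>k\<close> is well defined on \<open>\<int>\<^sub>n\<close>. The neighbours
  \<open>v + s\<close> (\<open>s \<in> S\<close>) of a vertex \<open>v\<close> are then pairwise distinct mod \<open>k\<close>, and as there are
  \<open>k = |S|\<close> of them they meet every residue class mod \<open>k\<close> exactly once. In particular every
  vertex has exactly one neighbour among the multiples of \<open>k\<close>, which therefore form a
  total perfect code. Connectedness only serves to exclude \<open>S = \<emptyset>\<close>.\<close>

lemma circ_adj_iff_add_mod:
  assumes "S \<subseteq> {..<n}" and "u < n"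
  shows "circ_adj n S u v \<longleftrightarrow> (\<exists>s\<in>S. v = (u + s) mod n)"
proof
  assume adj: "circ_adj n S u v"
  define s where "s = nat ((int v - int u) mod int n)"
  have "int s = (int v - int u) mod int n"
    using \<open>u < n\<close> by (simp add: s_def)
  then have "int ((u + s) mod n) = int v mod int n"
    by (simp add: of_nat_mod mod_add_right_eq)
  also have "\<dots> = int v"
    using adj by (simp add: circ_adj_def)
  finally have "(u + s) mod n = v"
    by (simp only: of_nat_eq_iff)
  moreover have "s \<in> S"
    using adj by (simp add: circ_adj_def s_def)
  ultimately show "\<exists>s\<in>S. v = (u + s) mod n"
    by auto
next
  assume "\<exists>s\<in>S. v = (u + s) mod n"
  then obtain s where s: "s \<in> S" "v = (u + s) mod n" by blast
  have "(int v - int u) mod int n = int s mod int n"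
    using s(2) by (simp add: of_nat_mod mod_diff_left_eq)
  also have "\<dots> = int s"
    using s(1) assms(1) by auto
  finally show "circ_adj n S u v"
    using s assms by (auto simp: circ_adj_def)
qed

lemma dvd_add_iff_cong_complement:
  assumes "0 < (k::nat)"
  shows "k dvd v + s \<longleftrightarrow> [s = k - v mod k] (mod k)"
proof -
  have "v + (k - v mod k) = k * (v div k) + k"
    using mod_less_divisor[OF assms, of v] mult_div_mod_eq[of k v] by linarith
  then have "[v + (k - v mod k) = 0] (mod k)"
    by (simp add: cong_0_iff)
  then have "k dvd v + s \<longleftrightarrow> [v + s = v + (k - v mod k)] (mod k)"
    by (metis cong_0_iff cong_sym cong_trans)
  then show ?thesis
    by (simp add: cong_add_lcancel_nat)
qed

lemma bij_betw_mod_if_inj_on: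
  assumes "finite S" and "card S = k" and "inj_on (\<lambda>s. s mod k) S"
  shows "bij_betw (\<lambda>s. s mod k) S {..<k}"
proof (cases "k = 0")
  case True
  then show ?thesis using assms(1,2) by (simp add: bij_betw_def)
next
  case False
  then have "(\<lambda>s. s mod k) ` S \<subseteq> {..<k}" by auto
  moreover have "card ((\<lambda>s. s mod k) ` S) = card {..<k}"
    using assms(2,3) by (simp add: card_image)
  ultimately show ?thesis
    using assms(3) by (simp add: bij_betw_def card_subset_eq)
qed

lemma circ_connected_nonempty:
  assumes "circ_connected n S" and "2 \<le> n"
  shows "S \<noteq> {}"
proof
  assume "S = {}"
  then have no_edge: "\<not> circ_adj n S u v" for u v
    by (simp add: circ_adj_def)
  have "(circ_adj n S)\<^sup>*\<^sup>* 0 1"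
    using assms unfolding circ_connected_def by auto
  then show False
    by (cases rule: converse_rtranclpE) (use no_edge in auto)
qed

lemma total_perfect_code_multiples:
  assumes "0 < k" and "k dvd n" and "S \<subseteq> {..<n}"
    and bij: "bij_betw (\<lambda>s. s mod k) S {..<k}"
  shows "total_perfect_code n S {c. c < n \<and> k dvd c}"
  unfolding total_perfect_code_def
proof (intro conjI allI impI)
  fix v assume "v < n"
  have neighbour_in_code_iff: "k dvd (v + s) mod n \<longleftrightarrow> s mod k = (k - v mod k) mod k" for s
    using assms(1,2) by (simp add: dvd_mod_iff dvd_add_iff_cong_complement cong_def)
  have "(k - v mod k) mod k \<in> (\<lambda>s. s mod k) ` S"
    using bij assms(1) by (simp add: bij_betw_imp_surj_on)
  then obtain s where s: "s \<in> S" "s mod k = (k - v mod k) mod k"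
    by auto
  show "\<exists>!c. c \<in> {c. c < n \<and> k dvd c} \<and> circ_adj n S v c"
  proof (rule ex1I)
    show "(v + s) mod n \<in> {c. c < n \<and> k dvd c} \<and> circ_adj n S v ((v + s) mod n)"
      using s \<open>v < n\<close> assms(3) neighbour_in_code_iff by (auto simp: circ_adj_iff_add_mod)
  next
    fix c assume "c \<in> {c. c < n \<and> k dvd c} \<and> circ_adj n S v c"
    then obtain s' where s': "s' \<in> S" "c = (v + s') mod n" "k dvd c"
      using \<open>v < n\<close> assms(3) by (auto simp: circ_adj_iff_add_mod)
    then have "s' mod k = s mod k"
      using s(2) neighbour_in_code_iff by simp
    then have "s' = s"
      using bij s(1) s'(1) by (auto simp: bij_betw_def inj_on_def)
    then show "c = (v + s) mod n"
      using s'(2) by simp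
  qed
qed auto

theorem lemma2p5:
  fixes n k :: nat and S :: "nat set"
  assumes "n \<ge> 4"
    and "S \<subseteq> {0..<n}"
    and "0 \<notin> S"
    and "circ_symmetric n S"
    and "circ_connected n S"
    and "k = card S"
    and "k dvd n"
    and "\<forall>s\<in>S. \<forall>s'\<in>S. s \<noteq> s' \<longrightarrow> s mod k \<noteq> s' mod k"
  shows "\<exists>C. total_perfect_code n S C"
proof -
  have S_below: "S \<subseteq> {..<n}"
    using assms(2) by auto
  then have "finite S"
    using finite_subset by blast
  moreover have "S \<noteq> {}"
    using circ_connected_nonempty assms(1,5) by simp
  ultimately have "0 < k"
    using assms(6) by (simp add: card_gt_0_iff)
  have "inj_on (\<lambda>s. s mod k) S"
    using assms(8) unfolding inj_on_def by blast
  then have "bij_betw (\<lambda>s. s mod k) S {..<k}"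
    using bij_betw_mod_if_inj_on \<open>finite S\<close> assms(6) by simp
  then show ?thesis
    using total_perfect_code_multiples[OF \<open>0 < k\<close> assms(7) S_below] by blast
qed

end
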